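(* Let $G$ be a group, $N$ a normal subgroup and $c\in\mathrm{C}_1(G;\mathbb{Z})$. The following are equivalent: (i) there exist $k,l\in\mathbb{Z}_{\ge0}$ and $x_1,\dots,x_k,\check x_1,\dots,\check x_l\in N$ with $c=x_1+\cdots+x_k-\check x_1-\cdots-\check x_l$ and $x_1\cdots x_k\check x_1^{-1}\cdots\check x_l^{-1}\in[G,N]$; (ii) $c\in\mathcal{C}_{\mathbb{Z}}(G,N)$.
   Context: $[G,N]$ is the subgroup generated by $[g,x]=gxg^{-1}x^{-1}$, $g\in G$, $x\in N$. $\mathrm{C}_1(G;A)$ is the free $A$-module on $G$, $\mathrm{C}_2(G;A)$ the free $A$-module on $G\times G$, $\partial(g_1,g_2)=g_2-g_1g_2+g_1$. $\mathrm{C}'_2(G,N;A)$ is the submodule generated by pairs $(g_1,g_2)$ with $g_1\in N$ or $g_2\in N$; $\mathrm{B}'_1(G,N;A)=\partial\,\mathrm{C}'_2(G,N;A)$; $\mathcal{C}_A(G,N)=\mathrm{C}_1(N;A)\cap\mathrm{B}'_1(G,N;A)$. *)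

theory Defs
  imports "HOL-Algebra.Algebra"
begin

definition supp :: "('b \<Rightarrow> int) \<Rightarrow> 'b set" where
  "supp c = {x. c x \<noteq> 0}"

text \<open>C_1(S; Z): free Z-module on a set S, as finitely supported functions S -> Z.\<close>
definition chains1 :: "'a set \<Rightarrow> ('a \<Rightarrow> int) set" where
  "chains1 S = {c. finite (supp c) \<and> supp c \<subseteq> S}"

definition chains2 :: "('a, 'b) monoid_scheme \<Rightarrow> ('a \<times> 'a \<Rightarrow> int) set" where
  "chains2 G = {c. finite (supp c) \<and> supp c \<subseteq> carrier G \<times> carrier G}"

text \<open>C'_2(G,N; Z): submodule generated by pairs (g1,g2) with g1 in N or g2 in N.\<close>
definition rel_chains2 :: "('a, 'b) monoid_scheme \<Rightarrow> 'a set \<Rightarrow> ('a \<times> 'a \<Rightarrow> int) set" where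
  "rel_chains2 G N = {c. c \<in> chains2 G \<and>
      supp c \<subseteq> {(g1, g2). g1 \<in> N \<or> g2 \<in> N}}"

definition basis1 :: "'a \<Rightarrow> 'a \<Rightarrow> int" where
  "basis1 g = (\<lambda>x. if x = g then 1 else 0)"

definition bdry2 :: "('a, 'b) monoid_scheme \<Rightarrow> ('a \<times> 'a \<Rightarrow> int) \<Rightarrow> 'a \<Rightarrow> int" where
  "bdry2 G c = (\<lambda>x. \<Sum>p\<in>supp c. c p *
      (basis1 (snd p) x - basis1 (fst p \<otimes>\<^bsub>G\<^esub> snd p) x + basis1 (fst p) x))"

definition rel_bdries1 :: "('a, 'b) monoid_scheme \<Rightarrow> 'a set \<Rightarrow> ('a \<Rightarrow> int) set" where
  "rel_bdries1 G N = bdry2 G ` rel_chains2 G N"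

definition calC :: "('a, 'b) monoid_scheme \<Rightarrow> 'a set \<Rightarrow> ('a \<Rightarrow> int) set" where
  "calC G N = chains1 N \<inter> rel_bdries1 G N"

definition comm_subgroup :: "('a, 'b) monoid_scheme \<Rightarrow> 'a set \<Rightarrow> 'a set" where
  "comm_subgroup G N = generate G
     {g \<otimes>\<^bsub>G\<^esub> x \<otimes>\<^bsub>G\<^esub> inv\<^bsub>G\<^esub> g \<otimes>\<^bsub>G\<^esub> inv\<^bsub>G\<^esub> x | g x. g \<in> carrier G \<and> x \<in> N}"

definition list_prod :: "('a, 'b) monoid_scheme \<Rightarrow> 'a list \<Rightarrow> 'a" where
  "list_prod G xs = foldr (\<lambda>x acc. x \<otimes>\<^bsub>G\<^esub> acc) xs \<one>\<^bsub>G\<^esub>"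

definition list_chain :: "'a list \<Rightarrow> 'a \<Rightarrow> int" where
  "list_chain xs = (\<lambda>g. int (count_list xs g))"

end

theory Submission
  imports Defs "HOL-Library.Function_Algebras"
begin

text \<open>
  For (i) \<Rightarrow> (ii), the boundaries of the pairs \<open>(x, y)\<close>, \<open>(y, y\<inverse>)\<close> and \<open>(a, b)\<close> with \<open>a\<close> or
  \<open>b\<close> in \<open>N\<close> show that \<open>x\<^sub>1 + \<dots> + x\<^sub>k \<equiv> x\<^sub>1\<cdots>x\<^sub>k\<close>, \<open>-y \<equiv> y\<inverse>\<close> and \<open>z \<equiv> 0\<close> for
  \<open>z \<in> [G,N]\<close> modulo \<open>B'\<^sub>1(G,N)\<close>.

  For (ii) \<Rightarrow> (i), choose a right transversal of \<open>N\<close> in \<open>G\<close> containing \<open>1\<close> and send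
  \<open>g = n s\<close> (\<open>n \<in> N\<close>, \<open>s\<close> in the transversal) to the class of \<open>n\<close> in the abelian group
  \<open>N/[G,N]\<close>. This map is multiplicative on every pair \<open>(a, b)\<close> with \<open>a \<in> N\<close> or \<open>b \<in> N\<close>
  (for \<open>b \<in> N\<close> because \<open>a b a\<inverse> \<equiv> b\<close> modulo \<open>[G,N]\<close>), so its \<open>\<int>\<close>-linear extension
  to \<open>N/[G,N]\<close> kills \<open>B'\<^sub>1(G,N)\<close>. Evaluated on \<open>x\<^sub>1 + \<dots> + x\<^sub>k - y\<^sub>1 - \<dots> - y\<^sub>l\<close> it gives
  the class of \<open>x\<^sub>1\<cdots>x\<^sub>k y\<^sub>1\<inverse>\<cdots>y\<^sub>l\<inverse>\<close>.
\<close>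

subsection \<open>Integer chains and the boundary map\<close>

lemma supp_add: "supp (c + d) \<subseteq> supp c \<union> supp d"
  by (auto simp: supp_def)

lemma supp_diff: "supp (c - d) \<subseteq> supp c \<union> supp d"
  by (auto simp: supp_def)

lemma supp_uminus [simp]: "supp (- c) = supp c"
  by (auto simp: supp_def)

lemma supp_zero [simp]: "supp 0 = {}"
  by (auto simp: supp_def)

lemma supp_basis1 [simp]: "supp (basis1 g) = {g}"
  by (auto simp: supp_def basis1_def)

lemma supp_scale: "supp (\<lambda>x. n * c x) \<subseteq> supp c"
  by (auto simp: supp_def)

lemma sum_fun_apply: "(\<Sum>p\<in>S. F p) x = (\<Sum>p\<in>S. F p x)"
  by (induction S rule: infinite_finite_induct) auto

lemma supp_sum: "supp (\<Sum>p\<in>S. F p) \<subseteq> (\<Union>p\<in>S. supp (F p))"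
  by (auto simp: supp_def sum_fun_apply intro: sum.neutral[THEN contrapos_pp])

lemma count_list_replicate: "count_list (replicate n a) g = (if g = a then n else 0)"
  by (induction n) auto

lemma list_chain_Nil: "list_chain [] = 0"
  by (auto simp: list_chain_def)

lemma list_chain_Cons: "list_chain (x # xs) = basis1 x + list_chain xs"
  by (auto simp: list_chain_def basis1_def)

lemma list_chain_append: "list_chain (xs @ ys) = list_chain xs + list_chain ys"
  by (auto simp: list_chain_def)

lemma supp_list_chain: "supp (list_chain xs) \<subseteq> set xs"
  by (auto simp: supp_def list_chain_def count_list_0_iff)

lemma finite_supp_list_chain: "finite (supp (list_chain xs))"
  using supp_list_chain by (rule finite_subset) simp

lemma chain_eq_list_chain_diff:
  assumes "finite (supp c)"
  shows "\<exists>xs ys. set xs \<subseteq> supp c \<and> set ys \<subseteq> supp c \<and> c = list_chain xs - list_chain ys"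
proof -
  have "\<exists>xs ys. set xs \<subseteq> supp c \<and> set ys \<subseteq> supp c \<and> c = list_chain xs - list_chain ys"
    if "finite S" "supp c \<subseteq> S" for S c
    using that
  proof (induction S arbitrary: c rule: finite_induct)
    case empty
    then have "c = 0" by (auto simp: supp_def)
    then show ?case by (intro exI[of _ "[]"]) (auto simp: list_chain_Nil)
  next
    case (insert a S)
    have "supp (c(a := 0)) \<subseteq> S" using insert.prems by (auto simp: supp_def)
    then obtain xs ys where xs: "set xs \<subseteq> supp (c(a := 0))" "set ys \<subseteq> supp (c(a := 0))"
      and c_upd: "c(a := 0) = list_chain xs - list_chain ys"
      using insert.IH by blast
    have "c = list_chain (replicate (nat (c a)) a @ xs) - list_chain (replicate (nat (- c a)) a @ ys)"
    proof
      fix g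
      show "c g = (list_chain (replicate (nat (c a)) a @ xs) - list_chain (replicate (nat (- c a)) a @ ys)) g"
        using fun_cong[OF c_upd, of g] by (cases "g = a") (auto simp: list_chain_def count_list_replicate)
    qed
    moreover have "set (replicate (nat (c a)) a @ xs) \<subseteq> supp c"
      "set (replicate (nat (- c a)) a @ ys) \<subseteq> supp c"
      using xs by (fastforce simp: supp_def split: if_splits)+
    ultimately show ?case by blast
  qed
  with assms show ?thesis by blast
qed

definition pair_bdry :: "('a, 'b) monoid_scheme \<Rightarrow> 'a \<Rightarrow> 'a \<Rightarrow> 'a \<Rightarrow> int" where
  "pair_bdry G a b = basis1 b - basis1 (a \<otimes>\<^bsub>G\<^esub> b) + basis1 a"

lemma finite_supp_pair_bdry: "finite (supp (pair_bdry G a b))"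
proof -
  have "supp (pair_bdry G a b) \<subseteq> {a, b, a \<otimes>\<^bsub>G\<^esub> b}"
    by (auto simp: supp_def pair_bdry_def basis1_def)
  then show ?thesis by (rule finite_subset) simp
qed

lemma bdry2_eq_sum:
  assumes "finite S" "supp c \<subseteq> S"
  shows "bdry2 G c = (\<Sum>p\<in>S. (\<lambda>x. c p * pair_bdry G (fst p) (snd p) x))"
proof
  fix x
  have "bdry2 G c x = (\<Sum>p\<in>supp c. c p * pair_bdry G (fst p) (snd p) x)"
    by (simp add: bdry2_def pair_bdry_def)
  also have "\<dots> = (\<Sum>p\<in>S. c p * pair_bdry G (fst p) (snd p) x)"
    by (rule sum.mono_neutral_left) (use assms in \<open>auto simp: supp_def\<close>)
  finally show "bdry2 G c x = (\<Sum>p\<in>S. (\<lambda>x. c p * pair_bdry G (fst p) (snd p) x)) x"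
    by (simp add: sum_fun_apply)
qed

lemma bdry2_add:
  assumes "finite (supp c)" "finite (supp d)"
  shows "bdry2 G (c + d) = bdry2 G c + bdry2 G d"
proof -
  let ?S = "supp c \<union> supp d"
  have "finite ?S" using assms by simp
  then show ?thesis
    using supp_add[of c d]
    by (intro ext) (simp add: bdry2_eq_sum[of ?S] sum_fun_apply distrib_right sum.distrib)
qed

lemma bdry2_uminus: "bdry2 G (- c) = - bdry2 G c"
  by (rule ext) (simp add: bdry2_def sum_negf)

lemma bdry2_basis1: "bdry2 G (basis1 (a, b)) = pair_bdry G a b"
  by (subst bdry2_eq_sum[of "{(a, b)}"]) (auto simp: basis1_def supp_def)

lemma rel_chains2_finite: "d \<in> rel_chains2 G N \<Longrightarrow> finite (supp d)"
  by (simp add: rel_chains2_def chains2_def)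

lemma rel_chains2_add: "c \<in> rel_chains2 G N \<Longrightarrow> d \<in> rel_chains2 G N \<Longrightarrow> c + d \<in> rel_chains2 G N"
  unfolding rel_chains2_def chains2_def using supp_add[of c d]
  by (auto intro: finite_subset)

lemma rel_chains2_uminus: "c \<in> rel_chains2 G N \<Longrightarrow> - c \<in> rel_chains2 G N"
  by (simp add: rel_chains2_def chains2_def)

lemma rel_bdries1_zero: "0 \<in> rel_bdries1 G N"
proof -
  have "bdry2 G 0 = 0" by (rule ext) (simp add: bdry2_def)
  moreover have "0 \<in> rel_chains2 G N" by (simp add: rel_chains2_def chains2_def)
  ultimately show ?thesis unfolding rel_bdries1_def by (metis imageI)
qed

lemma rel_bdries1_add:
  "u \<in> rel_bdries1 G N \<Longrightarrow> v \<in> rel_bdries1 G N \<Longrightarrow> u + v \<in> rel_bdries1 G N"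
  unfolding rel_bdries1_def
  by (auto simp: bdry2_add[symmetric] rel_chains2_finite intro!: imageI rel_chains2_add)

lemma rel_bdries1_uminus: "u \<in> rel_bdries1 G N \<Longrightarrow> - u \<in> rel_bdries1 G N"
  unfolding rel_bdries1_def
  by (auto simp: bdry2_uminus[symmetric] intro!: imageI rel_chains2_uminus)

lemma rel_bdries1_diff:
  "u \<in> rel_bdries1 G N \<Longrightarrow> v \<in> rel_bdries1 G N \<Longrightarrow> u - v \<in> rel_bdries1 G N"
  by (metis rel_bdries1_add rel_bdries1_uminus diff_conv_add_uminus)

lemma pair_bdry_in_rel_bdries1:
  assumes "a \<in> carrier G" "b \<in> carrier G" "a \<in> N \<or> b \<in> N"
  shows "pair_bdry G a b \<in> rel_bdries1 G N"
proof -
  have "basis1 (a, b) \<in> rel_chains2 G N"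
    using assms by (auto simp: rel_chains2_def chains2_def)
  then show ?thesis
    unfolding rel_bdries1_def bdry2_basis1[symmetric] by (rule imageI)
qed

lemma list_prod_Nil [simp]: "list_prod G [] = \<one>\<^bsub>G\<^esub>"
  by (simp add: list_prod_def)

lemma list_prod_Cons [simp]: "list_prod G (x # xs) = x \<otimes>\<^bsub>G\<^esub> list_prod G xs"
  by (simp add: list_prod_def)

lemma list_prod_carrier_update [simp]: "list_prod (G\<lparr>carrier := S\<rparr>) xs = list_prod G xs"
  by (simp add: list_prod_def)

lemma (in monoid) list_prod_closed: "set xs \<subseteq> carrier G \<Longrightarrow> list_prod G xs \<in> carrier G"
  by (induction xs) auto

lemma (in monoid) list_prod_append:
  "set xs \<subseteq> carrier G \<Longrightarrow> set ys \<subseteq> carrier G \<Longrightarrow>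
    list_prod G (xs @ ys) = list_prod G xs \<otimes> list_prod G ys"
  by (induction xs) (auto simp: list_prod_closed m_assoc)

lemma (in comm_group) inv_list_prod:
  "set xs \<subseteq> carrier G \<Longrightarrow> inv (list_prod G xs) = list_prod G (map (\<lambda>x. inv x) xs)"
  by (induction xs) (auto simp: list_prod_closed inv_mult)

lemma (in group_hom) hom_list_prod:
  "set xs \<subseteq> carrier G \<Longrightarrow> h (list_prod G xs) = list_prod H (map h xs)"
  by (induction xs) (auto simp: G.list_prod_closed)

subsection \<open>Relative boundaries coming from \<open>N\<close>\<close>

context group
begin

lemma basis1_one_in_rel_bdries1:
  assumes "\<one> \<in> N"
  shows "basis1 \<one> \<in> rel_bdries1 G N"
  using pair_bdry_in_rel_bdries1[of \<one> G \<one> N] assms by (simp add: pair_bdry_def)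

lemma list_chain_minus_list_prod_in_rel_bdries1:
  assumes "subgroup N G" "set xs \<subseteq> N"
  shows "list_chain xs - basis1 (list_prod G xs) \<in> rel_bdries1 G N"
  using assms(2)
proof (induction xs)
  case Nil
  show ?case
    unfolding list_chain_Nil list_prod_Nil diff_0
    by (intro rel_bdries1_uminus basis1_one_in_rel_bdries1 subgroup.one_closed[OF assms(1)])
next
  case (Cons x xs)
  have x: "x \<in> N" "x \<in> carrier G" and xs: "set xs \<subseteq> carrier G"
    using Cons.prems subgroup.subset[OF assms(1)] by auto
  have "list_chain (x # xs) - basis1 (list_prod G (x # xs)) =
      (list_chain xs - basis1 (list_prod G xs)) + pair_bdry G x (list_prod G xs)"
    by (simp add: list_chain_Cons pair_bdry_def)
  also have "\<dots> \<in> rel_bdries1 G N"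
    using x list_prod_closed[OF xs]
    by (intro rel_bdries1_add[OF Cons.IH] pair_bdry_in_rel_bdries1) (use Cons.prems in auto)
  finally show ?case .
qed

lemma basis1_add_basis1_inv_in_rel_bdries1:
  assumes "subgroup N G" "y \<in> N"
  shows "basis1 y + basis1 (inv y) \<in> rel_bdries1 G N"
proof -
  have y: "y \<in> carrier G" using assms subgroup.subset by blast
  have "basis1 y + basis1 (inv y) = pair_bdry G y (inv y) + basis1 \<one>"
    using y by (simp add: pair_bdry_def)
  also have "\<dots> \<in> rel_bdries1 G N"
    using assms y
    by (intro rel_bdries1_add[OF pair_bdry_in_rel_bdries1 basis1_one_in_rel_bdries1])
      (auto intro: subgroup.one_closed)
  finally show ?thesis .
qed

lemma list_chain_add_list_chain_inv_in_rel_bdries1: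
  assumes "subgroup N G" "set ys \<subseteq> N"
  shows "list_chain ys + list_chain (map (\<lambda>y. inv y) ys) \<in> rel_bdries1 G N"
  using assms(2)
proof (induction ys)
  case Nil
  show ?case
    unfolding list_chain_Nil list.map(1) add_0 by (rule rel_bdries1_zero)
next
  case (Cons y ys)
  have "list_chain (y # ys) + list_chain (map (\<lambda>y. inv y) (y # ys)) =
      (list_chain ys + list_chain (map (\<lambda>y. inv y) ys)) + (basis1 y + basis1 (inv y))"
    by (simp add: list_chain_Cons algebra_simps)
  also have "\<dots> \<in> rel_bdries1 G N"
    using Cons.prems
    by (intro rel_bdries1_add[OF Cons.IH] basis1_add_basis1_inv_in_rel_bdries1[OF assms(1)]) auto
  finally show ?case .
qed

lemma subgroup_basis1_in_rel_bdries1: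
  assumes "subgroup N G"
  shows "subgroup {k \<in> N. basis1 k \<in> rel_bdries1 G N} G"
proof
  interpret N: subgroup N G by (rule assms)
  show "{k \<in> N. basis1 k \<in> rel_bdries1 G N} \<subseteq> carrier G"
    by auto
  show "\<one> \<in> {k \<in> N. basis1 k \<in> rel_bdries1 G N}"
    by (simp add: basis1_one_in_rel_bdries1)
  fix a b
  assume a: "a \<in> {k \<in> N. basis1 k \<in> rel_bdries1 G N}"
    and b: "b \<in> {k \<in> N. basis1 k \<in> rel_bdries1 G N}"
  have "basis1 (a \<otimes> b) = (basis1 a + basis1 b) - pair_bdry G a b"
    by (simp add: pair_bdry_def)
  also have "\<dots> \<in> rel_bdries1 G N"
    using a b
    by (intro rel_bdries1_diff[OF rel_bdries1_add pair_bdry_in_rel_bdries1]) auto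
  finally show "a \<otimes> b \<in> {k \<in> N. basis1 k \<in> rel_bdries1 G N}"
    using a b by simp
  have "basis1 (inv a) = (basis1 a + basis1 (inv a)) - basis1 a"
    by simp
  also have "\<dots> \<in> rel_bdries1 G N"
    using a
    by (intro rel_bdries1_diff[OF basis1_add_basis1_inv_in_rel_bdries1[OF assms]]) auto
  finally show "inv a \<in> {k \<in> N. basis1 k \<in> rel_bdries1 G N}"
    using a by simp
qed

end

context normal
begin

lemma commutator_in_rel_bdries1:
  assumes g: "g \<in> carrier G" and x: "x \<in> H"
  shows "basis1 (g \<otimes> x \<otimes> inv g \<otimes> inv x) \<in> rel_bdries1 G H"
proof -
  define a where "a = g \<otimes> x \<otimes> inv g"
  have "a \<in> H" using inv_op_closed2[OF g x] by (simp add: a_def)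
  have x': "x \<in> carrier G" using x by auto
  have "a \<otimes> g = g \<otimes> x" using g x' by (simp add: a_def m_assoc)
  then have "basis1 (g \<otimes> x \<otimes> inv g \<otimes> inv x) =
      (basis1 x + basis1 (inv x)) - pair_bdry G g x + pair_bdry G a g - pair_bdry G a (inv x)"
    by (simp add: pair_bdry_def a_def)
  also have "\<dots> \<in> rel_bdries1 G H"
    using g x x' \<open>a \<in> H\<close>
    by (intro rel_bdries1_diff[OF rel_bdries1_add[OF rel_bdries1_diff]]
        basis1_add_basis1_inv_in_rel_bdries1[OF subgroup_axioms] pair_bdry_in_rel_bdries1) auto
  finally show ?thesis .
qed

lemma comm_subgroup_subset_basis1_in_rel_bdries1:
  "comm_subgroup G H \<subseteq> {k \<in> H. basis1 k \<in> rel_bdries1 G H}"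
  unfolding comm_subgroup_def
proof (rule generate_subgroup_incl[OF _ subgroup_basis1_in_rel_bdries1[OF subgroup_axioms]])
  show "{g \<otimes> x \<otimes> inv g \<otimes> inv x |g x. g \<in> carrier G \<and> x \<in> H}
      \<subseteq> {k \<in> H. basis1 k \<in> rel_bdries1 G H}"
  proof clarify
    fix g x assume "g \<in> carrier G" "x \<in> H"
    then show "g \<otimes> x \<otimes> inv g \<otimes> inv x \<in> H \<and> basis1 (g \<otimes> x \<otimes> inv g \<otimes> inv x) \<in> rel_bdries1 G H"
      using inv_op_closed2 commutator_in_rel_bdries1 by simp
  qed
qed

lemma list_chain_diff_in_calC:
  assumes xs: "set xs \<subseteq> H" and ys: "set ys \<subseteq> H"
    and prod: "list_prod G xs \<otimes> list_prod G (map (\<lambda>y. inv y) ys) \<in> comm_subgroup G H"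
  shows "list_chain xs - list_chain ys \<in> calC G H"
proof -
  let ?zs = "xs @ map (\<lambda>y. inv y) ys"
  have zs: "set ?zs \<subseteq> H" using xs ys by auto
  then have "list_prod G ?zs = list_prod G xs \<otimes> list_prod G (map (\<lambda>y. inv y) ys)"
    by (intro list_prod_append) auto
  then have prod_bdry: "basis1 (list_prod G ?zs) \<in> rel_bdries1 G H"
    using prod comm_subgroup_subset_basis1_in_rel_bdries1 by auto
  have "list_chain xs - list_chain ys =
      (list_chain ?zs - basis1 (list_prod G ?zs)) + basis1 (list_prod G ?zs)
        - (list_chain ys + list_chain (map (\<lambda>y. inv y) ys))"
    by (simp add: list_chain_append)
  also have "\<dots> \<in> rel_bdries1 G H"
    by (rule rel_bdries1_diff[OF rel_bdries1_add[OF
          list_chain_minus_list_prod_in_rel_bdries1[OF subgroup_axioms zs] prod_bdry]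
          list_chain_add_list_chain_inv_in_rel_bdries1[OF subgroup_axioms ys]])
  finally have "list_chain xs - list_chain ys \<in> rel_bdries1 G H" .
  moreover have supp_c: "supp (list_chain xs - list_chain ys) \<subseteq> set xs \<union> set ys"
    using supp_diff[of "list_chain xs" "list_chain ys"] supp_list_chain[of xs] supp_list_chain[of ys]
    by blast
  then have "list_chain xs - list_chain ys \<in> chains1 H"
    using xs ys unfolding chains1_def by (auto intro: finite_subset)
  ultimately show ?thesis
    unfolding calC_def by (rule IntI[rotated])
qed

end

subsection \<open>Integer chains evaluated in an abelian group\<close>

definition chain_prod :: "('c, 'd) monoid_scheme \<Rightarrow> ('a \<Rightarrow> 'c) \<Rightarrow> ('a \<Rightarrow> int) \<Rightarrow> 'c" where
  "chain_prod A f u = (\<Otimes>\<^bsub>A\<^esub> g\<in>supp u. f g [^]\<^bsub>A\<^esub> u g)"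

context comm_group
begin

lemma finprod_int_pow:
  assumes "finite A" "F \<in> A \<rightarrow> carrier G"
  shows "(\<Otimes>i\<in>A. F i) [^] (n::int) = (\<Otimes>i\<in>A. F i [^] n)"
  using assms by (induction A rule: finite_induct) (auto simp: int_pow_distrib Pi_iff)

lemma chain_prod_eq_finprod:
  assumes "f \<in> UNIV \<rightarrow> carrier G" "finite S" "supp u \<subseteq> S"
  shows "chain_prod G f u = (\<Otimes>g\<in>S. f g [^] u g)"
  unfolding chain_prod_def
  by (rule finprod_mono_neutral_cong_left) (use assms in \<open>auto simp: supp_def\<close>)

lemma chain_prod_closed: "f \<in> UNIV \<rightarrow> carrier G \<Longrightarrow> chain_prod G f u \<in> carrier G"
  unfolding chain_prod_def by (rule finprod_closed) auto

lemma chain_prod_zero [simp]: "chain_prod G f 0 = \<one>"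
  by (simp add: chain_prod_def)

lemma chain_prod_basis1:
  assumes "f \<in> UNIV \<rightarrow> carrier G"
  shows "chain_prod G f (basis1 g) = f g"
  unfolding chain_prod_def supp_basis1 using assms by (simp add: basis1_def Pi_iff)

lemma chain_prod_add:
  assumes f: "f \<in> UNIV \<rightarrow> carrier G" and "finite (supp u)" "finite (supp v)"
  shows "chain_prod G f (u + v) = chain_prod G f u \<otimes> chain_prod G f v"
proof -
  let ?S = "supp u \<union> supp v"
  have S: "finite ?S" using assms by simp
  have fg: "f g \<in> carrier G" for g using f by auto
  have "chain_prod G f (u + v) = (\<Otimes>g\<in>?S. f g [^] u g \<otimes> f g [^] v g)"
    using chain_prod_eq_finprod[OF f S supp_add] fg by (simp add: int_pow_mult)
  also have "\<dots> = chain_prod G f u \<otimes> chain_prod G f v"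
    using chain_prod_eq_finprod[OF f S, of u] chain_prod_eq_finprod[OF f S, of v] fg
    by (simp add: finprod_multf)
  finally show ?thesis .
qed

lemma chain_prod_uminus:
  assumes f: "f \<in> UNIV \<rightarrow> carrier G" and u: "finite (supp u)"
  shows "chain_prod G f (- u) = inv (chain_prod G f u)"
proof -
  have "chain_prod G f (- u) \<otimes> chain_prod G f u = \<one>"
    using chain_prod_add[OF f u, of "- u"] u chain_prod_closed[OF f] by (simp add: m_comm)
  then show ?thesis
    using chain_prod_closed[OF f] by (simp add: inv_equality)
qed

lemma chain_prod_diff:
  assumes f: "f \<in> UNIV \<rightarrow> carrier G" and u: "finite (supp u)" and v: "finite (supp v)"
  shows "chain_prod G f (u - v) = chain_prod G f u \<otimes> inv (chain_prod G f v)"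
  unfolding diff_conv_add_uminus chain_prod_add[OF f u, of "- v", simplified supp_uminus, OF v]
  by (simp only: chain_prod_uminus[OF f v])

lemma chain_prod_scale:
  assumes f: "f \<in> UNIV \<rightarrow> carrier G" and u: "finite (supp u)"
  shows "chain_prod G f (\<lambda>x. n * u x) = chain_prod G f u [^] n"
proof -
  have fg: "f g \<in> carrier G" for g using f by auto
  have "chain_prod G f (\<lambda>x. n * u x) = (\<Otimes>g\<in>supp u. (f g [^] u g) [^] n)"
    using chain_prod_eq_finprod[OF f u supp_scale] fg by (simp add: int_pow_pow mult.commute)
  also have "\<dots> = chain_prod G f u [^] n"
    using u fg by (simp add: chain_prod_def finprod_int_pow)
  finally show ?thesis .
qed

lemma chain_prod_sum:
  assumes f: "f \<in> UNIV \<rightarrow> carrier G" and "finite S" and "\<And>p. p \<in> S \<Longrightarrow> finite (supp (F p))"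
  shows "chain_prod G f (\<Sum>p\<in>S. F p) = (\<Otimes>p\<in>S. chain_prod G f (F p))"
  using assms(2,3)
proof (induction S rule: finite_induct)
  case empty
  show ?case unfolding sum.empty finprod_empty by (rule chain_prod_zero)
next
  case (insert p S)
  have fin_sum: "finite (supp (\<Sum>p\<in>S. F p))"
    by (rule finite_subset[OF supp_sum]) (use insert in auto)
  have "chain_prod G f (\<Sum>p\<in>insert p S. F p) = chain_prod G f (F p + (\<Sum>p\<in>S. F p))"
    by (simp only: sum.insert[OF insert.hyps])
  also have "\<dots> = chain_prod G f (F p) \<otimes> chain_prod G f (\<Sum>p\<in>S. F p)"
    using insert.prems by (intro chain_prod_add[OF f _ fin_sum]) auto
  also have "\<dots> = chain_prod G f (F p) \<otimes> (\<Otimes>p\<in>S. chain_prod G f (F p))"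
    using insert.IH insert.prems by (metis insertCI)
  also have "\<dots> = (\<Otimes>p\<in>insert p S. chain_prod G f (F p))"
    using insert.hyps chain_prod_closed[OF f] by (simp add: Pi_iff)
  finally show ?case .
qed

lemma chain_prod_list_chain:
  assumes "f \<in> UNIV \<rightarrow> carrier G"
  shows "chain_prod G f (list_chain xs) = list_prod G (map f xs)"
proof (induction xs)
  case Nil
  show ?case unfolding list_chain_Nil list.map(1) list_prod_Nil by (rule chain_prod_zero)
next
  case (Cons x xs)
  show ?case
    unfolding list_chain_Cons
    by (subst chain_prod_add[OF assms])
      (simp_all add: finite_supp_list_chain chain_prod_basis1[OF assms] Cons.IH)
qed

lemma chain_prod_pair_bdry:
  assumes f: "f \<in> UNIV \<rightarrow> carrier G"
  shows "chain_prod G f (pair_bdry H a b) = f b \<otimes> inv (f (a \<otimes>\<^bsub>H\<^esub> b)) \<otimes> f a"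
proof -
  have fin: "finite (supp (basis1 b + - basis1 (a \<otimes>\<^bsub>H\<^esub> b)))"
    by (rule finite_subset[OF supp_add]) simp
  have "pair_bdry H a b = basis1 b + - basis1 (a \<otimes>\<^bsub>H\<^esub> b) + basis1 a"
    by (simp add: pair_bdry_def)
  then show ?thesis
    by (simp only: chain_prod_add[OF f fin] chain_prod_add[OF f] chain_prod_uminus[OF f]
        chain_prod_basis1[OF f] supp_basis1 supp_uminus finite.intros)
qed

lemma chain_prod_rel_bdries1:
  assumes f: "f \<in> UNIV \<rightarrow> carrier G"
    and mult: "\<And>a b. a \<in> carrier H \<Longrightarrow> b \<in> carrier H \<Longrightarrow> a \<in> N \<or> b \<in> N \<Longrightarrow>
      f (a \<otimes>\<^bsub>H\<^esub> b) = f a \<otimes> f b"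
    and u: "u \<in> rel_bdries1 H N"
  shows "chain_prod G f u = \<one>"
proof -
  obtain d where d: "d \<in> rel_chains2 H N" and u_eq: "u = bdry2 H d"
    using u by (auto simp: rel_bdries1_def)
  have fin: "finite (supp d)" using d by (rule rel_chains2_finite)
  have "chain_prod G f u = (\<Otimes>p\<in>supp d. chain_prod G f (\<lambda>x. d p * pair_bdry H (fst p) (snd p) x))"
    unfolding u_eq bdry2_eq_sum[OF fin order_refl]
    by (rule chain_prod_sum[OF f fin]) (rule finite_subset[OF supp_scale finite_supp_pair_bdry])
  also have "\<dots> = \<one>"
  proof (rule finprod_one_eqI)
    fix p assume "p \<in> supp d"
    then obtain a b where p: "p = (a, b)" "a \<in> carrier H" "b \<in> carrier H" "a \<in> N \<or> b \<in> N"
      using d by (cases p) (auto simp: rel_chains2_def chains2_def)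
    have "f a \<in> carrier G" "f b \<in> carrier G" using f by auto
    then have "chain_prod G f (pair_bdry H a b) = \<one>"
      using p by (simp add: chain_prod_pair_bdry[OF f] mult m_assoc m_comm[of "f b"] inv_mult)
    then show "chain_prod G f (\<lambda>x. d p * pair_bdry H (fst p) (snd p) x) = \<one>"
      using p(1) by (simp add: chain_prod_scale[OF f finite_supp_pair_bdry])
  qed
  finally show ?thesis .
qed

end

subsection \<open>The quotient \<open>N/[G,N]\<close>\<close>

definition comm_quotient :: "('a, 'b) monoid_scheme \<Rightarrow> 'a set \<Rightarrow> 'a set monoid" where
  "comm_quotient G N = G\<lparr>carrier := N\<rparr> Mod comm_subgroup G N"

lemma r_coset_carrier_update [simp]: "K #>\<^bsub>G\<lparr>carrier := S\<rparr>\<^esub> a = K #>\<^bsub>G\<^esub> a"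
  by (simp add: r_coset_def)

context normal
begin

lemma commutator_in_comm_subgroup:
  "g \<in> carrier G \<Longrightarrow> x \<in> H \<Longrightarrow> g \<otimes> x \<otimes> inv g \<otimes> inv x \<in> comm_subgroup G H"
  unfolding comm_subgroup_def by (rule generate.incl) blast

lemma comm_subgroup_subset: "comm_subgroup G H \<subseteq> H"
  using comm_subgroup_subset_basis1_in_rel_bdries1 by blast

lemma comm_subgroup_is_subgroup: "subgroup (comm_subgroup G H) G"
  unfolding comm_subgroup_def by (rule generate_is_subgroup) auto

lemma comm_subgroup_is_normal: "comm_subgroup G H \<lhd> G"
proof (rule normal_invI[OF comm_subgroup_is_subgroup])
  fix g k assume g: "g \<in> carrier G" and k: "k \<in> comm_subgroup G H"
  then have k': "k \<in> H" "k \<in> carrier G" using comm_subgroup_subset by auto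
  have "g \<otimes> k \<otimes> inv g = (g \<otimes> k \<otimes> inv g \<otimes> inv k) \<otimes> k"
    using g k' by (simp add: m_assoc)
  then show "g \<otimes> k \<otimes> inv g \<in> comm_subgroup G H"
    using commutator_in_comm_subgroup[OF g k'(1)] k
      subgroup.m_closed[OF comm_subgroup_is_subgroup] by metis
qed

lemma rcos_comm_subgroup_eq:
  assumes "a \<in> carrier G" "b \<in> carrier G" "a \<otimes> inv b \<in> comm_subgroup G H"
  shows "comm_subgroup G H #> a = comm_subgroup G H #> b"
  using assms is_group comm_subgroup_is_subgroup
  by (metis repr_independence subgroup.rcos_module_rev)

lemma comm_quotient_mult:
  "a \<in> carrier G \<Longrightarrow> b \<in> carrier G \<Longrightarrow>
    (comm_subgroup G H #> a) \<otimes>\<^bsub>comm_quotient G H\<^esub> (comm_subgroup G H #> b) =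
      comm_subgroup G H #> (a \<otimes> b)"
  by (simp add: comm_quotient_def FactGroup_def set_mult_def
      normal.rcos_sum[OF comm_subgroup_is_normal, symmetric])

lemma comm_quotient_one: "\<one>\<^bsub>comm_quotient G H\<^esub> = comm_subgroup G H"
  by (simp add: comm_quotient_def FactGroup_def)

lemma comm_quotient_carrier: "carrier (comm_quotient G H) = (\<lambda>a. comm_subgroup G H #> a) ` H"
  by (auto simp: comm_quotient_def FactGroup_def RCOSETS_def)

lemma comm_subgroup_normal_restrict: "comm_subgroup G H \<lhd> G\<lparr>carrier := H\<rparr>"
  by (rule normal_restrict_supergroup[OF subgroup_axioms comm_subgroup_is_normal
        comm_subgroup_subset])

lemma rcos_comm_subgroup_hom:
  "group_hom (G\<lparr>carrier := H\<rparr>) (comm_quotient G H) (\<lambda>a. comm_subgroup G H #> a)"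
proof -
  interpret K: normal "comm_subgroup G H" "G\<lparr>carrier := H\<rparr>"
    by (rule comm_subgroup_normal_restrict)
  show ?thesis
    using K.r_coset_hom_Mod K.factorgroup_is_group
    by (simp add: group_hom_def group_hom_axioms_def K.is_group comm_quotient_def)
qed

lemma comm_quotient_is_comm_group: "comm_group (comm_quotient G H)"
proof (rule group.group_comm_groupI)
  show "group (comm_quotient G H)"
    unfolding comm_quotient_def by (rule normal.factorgroup_is_group[OF comm_subgroup_normal_restrict])
  fix C D assume "C \<in> carrier (comm_quotient G H)" "D \<in> carrier (comm_quotient G H)"
  then obtain a b where ab: "a \<in> H" "b \<in> H"
    and C: "C = comm_subgroup G H #> a" and D: "D = comm_subgroup G H #> b"
    by (auto simp: comm_quotient_carrier)
  then have "a \<in> carrier G" "b \<in> carrier G" by auto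
  moreover have "a \<otimes> b \<otimes> inv (b \<otimes> a) = a \<otimes> b \<otimes> inv a \<otimes> inv b"
    using \<open>a \<in> carrier G\<close> \<open>b \<in> carrier G\<close> by (simp add: inv_mult_group m_assoc)
  ultimately show "C \<otimes>\<^bsub>comm_quotient G H\<^esub> D = D \<otimes>\<^bsub>comm_quotient G H\<^esub> C"
    using commutator_in_comm_subgroup[OF _ ab(2)] unfolding C D
    by (simp add: comm_quotient_mult rcos_comm_subgroup_eq)
qed

end

text \<open>
  \<open>coset_rep\<close> picks a representative of each right coset of \<open>N\<close>, namely \<open>\<one>\<close> for \<open>N\<close> itself;
  then \<open>g = normal_part G N g \<otimes> coset_rep G (N #> g)\<close> with \<open>normal_part G N g \<in> N\<close>.
\<close>
definition coset_rep :: "('a, 'b) monoid_scheme \<Rightarrow> 'a set \<Rightarrow> 'a" where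
  "coset_rep G C = (if \<one>\<^bsub>G\<^esub> \<in> C then \<one>\<^bsub>G\<^esub> else (SOME r. r \<in> C))"

definition normal_part :: "('a, 'b) monoid_scheme \<Rightarrow> 'a set \<Rightarrow> 'a \<Rightarrow> 'a" where
  "normal_part G N g = g \<otimes>\<^bsub>G\<^esub> inv\<^bsub>G\<^esub> coset_rep G (N #>\<^bsub>G\<^esub> g)"

definition normal_class :: "('a, 'b) monoid_scheme \<Rightarrow> 'a set \<Rightarrow> 'a \<Rightarrow> 'a set" where
  "normal_class G N g =
    (if g \<in> carrier G then comm_subgroup G N #>\<^bsub>G\<^esub> normal_part G N g else comm_subgroup G N)"

context normal
begin

lemma coset_rep_in_rcos: "g \<in> carrier G \<Longrightarrow> coset_rep G (H #> g) \<in> H #> g"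
  unfolding coset_rep_def using rcos_self[OF _ subgroup_axioms] someI[of "\<lambda>r. r \<in> H #> g" g]
  by auto

lemma normal_part_in:
  assumes g: "g \<in> carrier G"
  shows "normal_part G H g \<in> H"
proof -
  let ?r = "coset_rep G (H #> g)"
  have r: "?r \<in> carrier G" "?r \<otimes> inv g \<in> H"
    using coset_rep_in_rcos[OF g] rcos_module_imp[OF is_group g] elemrcos_carrier[OF is_group g]
    by auto
  then have "inv (?r \<otimes> inv g) \<in> H" by blast
  then show ?thesis
    using g r by (simp add: normal_part_def inv_mult_group)
qed

lemma normal_part_id: "x \<in> H \<Longrightarrow> normal_part G H x = x"
  using rcos_const[OF is_group] by (auto simp: normal_part_def coset_rep_def)

lemma normal_part_mult_left:
  assumes h: "h \<in> H" and g: "g \<in> carrier G"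
  shows "normal_part G H (h \<otimes> g) = h \<otimes> normal_part G H g"
proof -
  have h': "h \<in> carrier G" using h by auto
  have "H #> (h \<otimes> g) = H #> g"
    using coset_mult_assoc[OF subset h' g] rcos_const[OF is_group h] by simp
  moreover have "coset_rep G (H #> g) \<in> carrier G"
    using coset_rep_in_rcos[OF g] elemrcos_carrier[OF is_group g] by blast
  ultimately show ?thesis
    using h' g by (simp add: normal_part_def m_assoc)
qed

lemma normal_part_mult_right:
  assumes a: "a \<in> carrier G" and b: "b \<in> H"
  shows "normal_part G H (a \<otimes> b) = (a \<otimes> b \<otimes> inv a) \<otimes> normal_part G H a"
proof -
  have "a \<otimes> b = (a \<otimes> b \<otimes> inv a) \<otimes> a"
    using a b by (simp add: m_assoc)
  then show ?thesis
    using normal_part_mult_left[OF inv_op_closed2[OF a b] a] by simp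
qed

lemma normal_class_closed: "normal_class G H \<in> UNIV \<rightarrow> carrier (comm_quotient G H)"
proof
  fix g
  have "comm_subgroup G H = comm_subgroup G H #> \<one>"
    using comm_subgroup_subset subset by (simp add: coset_mult_one)
  then show "normal_class G H g \<in> carrier (comm_quotient G H)"
    using normal_part_in by (auto simp: normal_class_def comm_quotient_carrier)
qed

lemma normal_class_eq: "x \<in> H \<Longrightarrow> normal_class G H x = comm_subgroup G H #> x"
  by (auto simp: normal_class_def normal_part_id)

lemma normal_class_mult:
  assumes a: "a \<in> carrier G" and b: "b \<in> carrier G" and ab: "a \<in> H \<or> b \<in> H"
  shows "normal_class G H (a \<otimes> b) =
    normal_class G H a \<otimes>\<^bsub>comm_quotient G H\<^esub> normal_class G H b"
  using ab
proof
  assume "a \<in> H"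
  then show ?thesis
    using a b normal_part_in[OF b]
    by (simp add: normal_class_def normal_part_mult_left normal_part_id comm_quotient_mult)
next
  assume "b \<in> H"
  interpret Q: comm_group "comm_quotient G H" by (rule comm_quotient_is_comm_group)
  have conj: "a \<otimes> b \<otimes> inv a \<in> carrier G" using a b by simp
  have "comm_subgroup G H #> (a \<otimes> b \<otimes> inv a) = comm_subgroup G H #> b"
    using commutator_in_comm_subgroup[OF a \<open>b \<in> H\<close>] a b
    by (intro rcos_comm_subgroup_eq) auto
  then have "normal_class G H (a \<otimes> b) =
      normal_class G H b \<otimes>\<^bsub>comm_quotient G H\<^esub> normal_class G H a"
    using a b conj normal_part_in[OF a] \<open>b \<in> H\<close>
    by (simp add: normal_class_def normal_part_mult_right normal_part_id comm_quotient_mult[symmetric])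
  moreover have "normal_class G H a \<in> carrier (comm_quotient G H)"
    "normal_class G H b \<in> carrier (comm_quotient G H)"
    using normal_class_closed by auto
  ultimately show ?thesis
    by (simp add: Q.m_comm)
qed

lemma chain_prod_normal_class_list_chain_diff:
  assumes xs: "set xs \<subseteq> H" and ys: "set ys \<subseteq> H"
  shows "chain_prod (comm_quotient G H) (normal_class G H) (list_chain xs - list_chain ys) =
    comm_subgroup G H #> (list_prod G xs \<otimes> list_prod G (map (\<lambda>y. inv y) ys))"
proof -
  interpret Q: comm_group "comm_quotient G H" by (rule comm_quotient_is_comm_group)
  interpret \<pi>: group_hom "G\<lparr>carrier := H\<rparr>" "comm_quotient G H" "\<lambda>a. comm_subgroup G H #> a"
    by (rule rcos_comm_subgroup_hom)
  let ?\<pi> = "\<lambda>a. comm_subgroup G H #> a"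
  have f: "normal_class G H \<in> UNIV \<rightarrow> carrier (comm_quotient G H)"
    by (rule normal_class_closed)
  have f_eq: "map (normal_class G H) zs = map ?\<pi> zs" if "set zs \<subseteq> H" for zs
    using that by (auto simp: normal_class_eq)
  have inv_ys: "set (map (\<lambda>y. inv y) ys) \<subseteq> H" using ys by auto
  have \<pi>_list_prod: "?\<pi> (list_prod G zs) = list_prod (comm_quotient G H) (map ?\<pi> zs)"
    if "set zs \<subseteq> H" for zs
    using \<pi>.hom_list_prod[of zs] that by simp
  have \<pi>_ys: "set (map ?\<pi> ys) \<subseteq> carrier (comm_quotient G H)"
    using ys \<pi>.hom_closed by auto
  have "map (\<lambda>C. inv\<^bsub>comm_quotient G H\<^esub> C) (map ?\<pi> ys) = map ?\<pi> (map (\<lambda>y. inv y) ys)"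
    using ys \<pi>.hom_inv m_inv_consistent[OF subgroup_axioms] by auto
  then have \<pi>_inv: "inv\<^bsub>comm_quotient G H\<^esub> list_prod (comm_quotient G H) (map ?\<pi> ys) =
      ?\<pi> (list_prod G (map (\<lambda>y. inv y) ys))"
    unfolding Q.inv_list_prod[OF \<pi>_ys] \<pi>_list_prod[OF inv_ys] by (rule arg_cong)
  have "chain_prod (comm_quotient G H) (normal_class G H) (list_chain xs - list_chain ys) =
      list_prod (comm_quotient G H) (map ?\<pi> xs) \<otimes>\<^bsub>comm_quotient G H\<^esub>
      inv\<^bsub>comm_quotient G H\<^esub> list_prod (comm_quotient G H) (map ?\<pi> ys)"
    unfolding Q.chain_prod_diff[OF f finite_supp_list_chain finite_supp_list_chain]
    by (simp add: Q.chain_prod_list_chain[OF f] f_eq xs ys)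
  also have "\<dots> = ?\<pi> (list_prod G xs) \<otimes>\<^bsub>comm_quotient G H\<^esub>
      ?\<pi> (list_prod G (map (\<lambda>y. inv y) ys))"
    unfolding \<pi>_inv \<pi>_list_prod[OF xs] ..
  also have "\<dots> = ?\<pi> (list_prod G xs \<otimes> list_prod G (map (\<lambda>y. inv y) ys))"
    using xs inv_ys by (simp add: comm_quotient_mult list_prod_closed subset_trans[OF _ subset])
  finally show ?thesis .
qed

lemma list_prod_in_comm_subgroup:
  assumes xs: "set xs \<subseteq> H" and ys: "set ys \<subseteq> H"
    and bdry: "list_chain xs - list_chain ys \<in> rel_bdries1 G H"
  shows "list_prod G xs \<otimes> list_prod G (map (\<lambda>y. inv y) ys) \<in> comm_subgroup G H"
proof -
  interpret Q: comm_group "comm_quotient G H" by (rule comm_quotient_is_comm_group)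
  have "comm_subgroup G H #> (list_prod G xs \<otimes> list_prod G (map (\<lambda>y. inv y) ys)) =
      comm_subgroup G H"
    using Q.chain_prod_rel_bdries1[OF normal_class_closed normal_class_mult bdry]
    by (simp add: chain_prod_normal_class_list_chain_diff[OF xs ys] comm_quotient_one)
  moreover have "list_prod G xs \<otimes> list_prod G (map (\<lambda>y. inv y) ys) \<in> carrier G"
    using xs ys subset by (intro m_closed list_prod_closed) auto
  ultimately show ?thesis
    using rcos_self[OF _ comm_subgroup_is_subgroup] by metis
qed

end

theorem lemma5p16:
  fixes G :: "('a, 'b) monoid_scheme" and N :: "'a set" and c :: "'a \<Rightarrow> int"
  assumes "group G" and "N \<lhd> G" and "c \<in> chains1 (carrier G)"
  shows "(\<exists>xs ys. set xs \<subseteq> N \<and> set ys \<subseteq> N \<and>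
            c = (\<lambda>g. list_chain xs g - list_chain ys g) \<and>
            list_prod G xs \<otimes>\<^bsub>G\<^esub> list_prod G (map (\<lambda>y. inv\<^bsub>G\<^esub> y) ys) \<in> comm_subgroup G N)
         \<longleftrightarrow> c \<in> calC G N"
proof -
  interpret normal N G by (rule assms(2))
  have diff: "(\<lambda>g. list_chain xs g - list_chain ys g) = list_chain xs - list_chain ys" for xs ys
    by (simp add: fun_diff_def)
  show ?thesis
  proof
    assume "\<exists>xs ys. set xs \<subseteq> N \<and> set ys \<subseteq> N \<and> c = (\<lambda>g. list_chain xs g - list_chain ys g) \<and>
      list_prod G xs \<otimes>\<^bsub>G\<^esub> list_prod G (map (\<lambda>y. inv\<^bsub>G\<^esub> y) ys) \<in> comm_subgroup G N"
    then show "c \<in> calC G N"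
      unfolding diff using list_chain_diff_in_calC by blast
  next
    assume c: "c \<in> calC G N"
    then have "finite (supp c)" "supp c \<subseteq> N" by (auto simp: calC_def chains1_def)
    then obtain xs ys where "set xs \<subseteq> N" "set ys \<subseteq> N" "c = list_chain xs - list_chain ys"
      using chain_eq_list_chain_diff by blast
    moreover have "c \<in> rel_bdries1 G N" using c by (simp add: calC_def)
    ultimately show "\<exists>xs ys. set xs \<subseteq> N \<and> set ys \<subseteq> N \<and>
        c = (\<lambda>g. list_chain xs g - list_chain ys g) \<and>
        list_prod G xs \<otimes>\<^bsub>G\<^esub> list_prod G (map (\<lambda>y. inv\<^bsub>G\<^esub> y) ys) \<in> comm_subgroup G N"
      unfolding diff using list_prod_in_comm_subgroup by blast
  qed
qed

end
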